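(* Let $\Theta\subseteq\mathbb{R}^p$ be convex, and let $f:\mathbb{R}^p\to\mathbb{R}$ be continuous, convex, and bounded below, with a minimizer $\theta^\star$ on $\Theta$; set $f^\star\triangleq f(\theta^\star)$. Let $\theta_0\in\Theta$ and consider the sequence generated by: for $n\ge1$, choose $g_n\in\mathcal{S}_L(f,\theta_{n-1})$ and set $\theta_n\in\operatorname{arg\,min}_{\theta\in\Theta}g_n(\theta)$. (i) If there is $R>0$ such that $\|\theta-\theta^\star\|_2\le R$ for all $\theta\in\Theta$ with $f(\theta)\le f(\theta_0)$, then $f(\theta_n)-f^\star\le \frac{2LR^2}{n+2}$ for all $n\ge1$. (ii) If $f$ is $\mu$-strongly convex (with no level-set assumption), then $f(\theta_n)-f^\star\le\beta^n(f(\theta_0)-f^\star)$ for all $n\ge1$, where $\beta\triangleq\frac{L}{\mu}$ if $\mu>2L$ and $\beta\triangleq 1-\frac{\mu}{4L}$ otherwise.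
   Context: First-order surrogates: given convex $\Theta\subseteq\mathbb{R}^p$, $g:\mathbb{R}^p\to\mathbb{R}$ belongs to $\mathcal{S}_L(f,\kappa)$ if (a) $g(\theta')\ge f(\theta')$ for all $\theta'\in\operatorname{arg\,min}_{\theta\in\Theta}g(\theta)$, and (b) $h\triangleq g-f$ is differentiable on $\mathbb{R}^p$ with $L$-Lipschitz gradient, $h(\kappa)=0$ and $\nabla h(\kappa)=0$. The minimizers $\theta_n$ are assumed to exist. *)

theory Defs
  imports "HOL-Analysis.Analysis"
begin

definition is_argmin_on :: "'a set \<Rightarrow> ('a \<Rightarrow> real) \<Rightarrow> 'a \<Rightarrow> bool" where
  "is_argmin_on Th g x \<longleftrightarrow> x \<in> Th \<and> (\<forall>y\<in>Th. g x \<le> g y)"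

definition first_order_surrogate ::
  "'a::euclidean_space set \<Rightarrow> real \<Rightarrow> ('a \<Rightarrow> real) \<Rightarrow> 'a \<Rightarrow> ('a \<Rightarrow> real) \<Rightarrow> bool" where
  "first_order_surrogate Th L f \<kappa> g \<longleftrightarrow>
     (\<forall>x. is_argmin_on Th g x \<longrightarrow> f x \<le> g x) \<and>
     (\<exists>dh :: 'a \<Rightarrow> 'a.
        (\<forall>x. ((\<lambda>y. g y - f y) has_derivative (\<lambda>v. dh x \<bullet> v)) (at x)) \<and>
        (\<forall>x y. norm (dh x - dh y) \<le> L * norm (x - y)) \<and>
        g \<kappa> - f \<kappa> = 0 \<and> dh \<kappa> = 0)"

definition strongly_convex :: "real \<Rightarrow> ('a::real_normed_vector \<Rightarrow> real) \<Rightarrow> bool" where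
  "strongly_convex \<mu> f \<longleftrightarrow>
     (\<forall>x y t. 0 \<le> t \<and> t \<le> 1 \<longrightarrow>
        f (t *\<^sub>R x + (1 - t) *\<^sub>R y) \<le> t * f x + (1 - t) * f y - \<mu> / 2 * t * (1 - t) * (norm (x - y))\<^sup>2)"

end

theory Submission imports Defs begin

text \<open>Since \<open>g - f\<close> vanishes to first order at \<open>\<kappa>\<close> with \<open>L\<close>-Lipschitz gradient, a surrogate in
  \<open>S_L(f, \<kappa>)\<close> lies below \<open>f + L/2 \<parallel>\<cdot> - \<kappa>\<parallel>\<^sup>2\<close>, while at its minimizer it lies above \<open>f\<close>.
  Comparing \<open>\<theta>\<^sub>n\<close> with the points \<open>a \<theta>\<^sup>\<star> + (1 - a) \<theta>\<^sub>n\<^sub>-\<^sub>1\<close> of the segment towards the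
  minimizer gives \<open>r\<^sub>n \<le> (1 - a) r\<^sub>n\<^sub>-\<^sub>1 + L a\<^sup>2 \<parallel>\<theta>\<^sup>\<star> - \<theta>\<^sub>n\<^sub>-\<^sub>1\<parallel>\<^sup>2 / 2\<close> for the excess values
  \<open>r\<^sub>n = f(\<theta>\<^sub>n) - f\<^sup>\<star>\<close>. Bounding the distance by \<open>R\<close> (the iterates stay in the initial
  sublevel set) and choosing \<open>a = 2/(n+2)\<close> yields the \<open>O(1/n)\<close> rate; under strong convexity the
  choice \<open>a = \<mu>/(L + \<mu>)\<close> cancels the distance term against the strong-convexity gain, giving a
  linear rate with ratio \<open>L/(L + \<mu>) \<le> \<beta>\<close>.\<close>

lemma lipschitz_gradient_quadratic_upper_bound:
  fixes h :: "'a::euclidean_space \<Rightarrow> real" and dh :: "'a \<Rightarrow> 'a"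
  assumes der: "\<And>x. (h has_derivative (\<lambda>v. dh x \<bullet> v)) (at x)"
    and lip: "\<And>x y. norm (dh x - dh y) \<le> L * norm (x - y)"
  shows "h y \<le> h x + dh x \<bullet> (y - x) + L / 2 * (norm (y - x))\<^sup>2"
proof -
  define v where "v = y - x"
  define \<psi> where "\<psi> t = h (x + t *\<^sub>R v) - t * (dh x \<bullet> v) - L / 2 * t\<^sup>2 * (norm v)\<^sup>2" for t
  have "\<psi> 1 \<le> \<psi> 0"
  proof (rule DERIV_nonpos_imp_nonincreasing[of 0 1])
    fix t :: real assume t: "0 \<le> t" "t \<le> 1"
    have line: "((\<lambda>t. x + t *\<^sub>R v) has_derivative (\<lambda>s. s *\<^sub>R v)) (at t)"
      by (auto intro!: derivative_eq_intros)
    have linear_form: "(\<lambda>s. dh y \<bullet> (s *\<^sub>R v)) = (*) (dh y \<bullet> v)" for y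
      by (simp add: fun_eq_iff)
    have h_line: "((\<lambda>t. h (x + t *\<^sub>R v)) has_field_derivative (dh (x + t *\<^sub>R v) \<bullet> v)) (at t)"
      using has_derivative_compose[OF line der, unfolded linear_form]
      unfolding has_field_derivative_def .
    have D: "(\<psi> has_field_derivative
        (dh (x + t *\<^sub>R v) \<bullet> v - dh x \<bullet> v - L * t * (norm v)\<^sup>2)) (at t)"
      unfolding \<psi>_def by (rule derivative_eq_intros h_line refl | simp)+
    have "(dh (x + t *\<^sub>R v) - dh x) \<bullet> v \<le> norm (dh (x + t *\<^sub>R v) - dh x) * norm v"
      by (rule norm_cauchy_schwarz[THEN order_trans]) simp
    also have "\<dots> \<le> L * norm (t *\<^sub>R v) * norm v"
      using lip[of "x + t *\<^sub>R v" x] by (intro mult_right_mono) auto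
    also have "\<dots> = L * t * (norm v)\<^sup>2"
      using t by (simp add: power2_eq_square)
    finally have "dh (x + t *\<^sub>R v) \<bullet> v - dh x \<bullet> v - L * t * (norm v)\<^sup>2 \<le> 0"
      by (simp add: inner_diff_left)
    with D show "\<exists>y. DERIV \<psi> t :> y \<and> y \<le> 0" by blast
  qed simp
  then show ?thesis unfolding \<psi>_def v_def by simp
qed

lemma first_order_surrogate_argmin_le:
  assumes surrogate: "first_order_surrogate Th L f \<kappa> g"
    and argmin: "is_argmin_on Th g x'"
    and x: "x \<in> Th"
  shows "f x' \<le> f x + L / 2 * (norm (x - \<kappa>))\<^sup>2"
proof -
  from surrogate obtain dh where
    majorizes: "\<forall>x. is_argmin_on Th g x \<longrightarrow> f x \<le> g x" and
    der: "\<forall>x. ((\<lambda>y. g y - f y) has_derivative (\<lambda>v. dh x \<bullet> v)) (at x)" and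
    lip: "\<forall>x y. norm (dh x - dh y) \<le> L * norm (x - y)" and
    tangent: "g \<kappa> - f \<kappa> = 0" "dh \<kappa> = 0"
    unfolding first_order_surrogate_def by blast
  have "g x - f x \<le> (g \<kappa> - f \<kappa>) + dh \<kappa> \<bullet> (x - \<kappa>) + L / 2 * (norm (x - \<kappa>))\<^sup>2"
    using lipschitz_gradient_quadratic_upper_bound[of "\<lambda>y. g y - f y" dh L] der lip by blast
  then have "g x \<le> f x + L / 2 * (norm (x - \<kappa>))\<^sup>2"
    using tangent by simp
  moreover have "f x' \<le> g x'"
    using majorizes argmin by blast
  moreover have "g x' \<le> g x"
    using argmin x unfolding is_argmin_on_def by blast
  ultimately show ?thesis by linarith
qed

lemma sublinear_rate_of_recursion:
  fixes r :: "nat \<Rightarrow> real"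
  assumes c: "c \<ge> 0"
    and recursion: "\<And>m a. 0 \<le> a \<Longrightarrow> a \<le> 1 \<Longrightarrow> r (Suc m) \<le> (1 - a) * r m + a\<^sup>2 * c / 2"
  shows "r (Suc m) \<le> 2 * c / (real m + 3)"
proof (induction m)
  case 0
  show ?case using recursion[of 1 0] c by simp
next
  case (Suc m)
  define k where "k = real m + 3"
  have k: "k \<ge> 3" by (simp add: k_def)
  define a where "a = 2 / (k + 1)"
  have a: "0 \<le> a" "a \<le> 1" using k by (auto simp: a_def)
  have "r (Suc (Suc m)) \<le> (1 - a) * r (Suc m) + a\<^sup>2 * c / 2"
    using recursion a by blast
  also have "\<dots> \<le> (1 - a) * (2 * c / k) + a\<^sup>2 * c / 2"
    using Suc.IH a unfolding k_def by (intro add_right_mono mult_left_mono) auto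
  also have "\<dots> = 2 * c / (k + 1) * ((k - 1) / k + 1 / (k + 1))"
    using k by (simp add: a_def divide_simps) (simp add: algebra_simps power2_eq_square)
  also have "\<dots> \<le> 2 * c / (k + 1) * 1"
  proof (rule mult_left_mono)
    show "(k - 1) / k + 1 / (k + 1) \<le> 1"
      using k by (simp add: divide_simps) (simp add: algebra_simps)
  qed (use k c in simp)
  finally show ?case by (simp add: k_def add.commute add.left_commute)
qed

lemma linear_rate_ratio_le:
  fixes L \<mu> :: real
  assumes "L > 0" "\<mu> > 0"
  shows "L / (L + \<mu>) \<le> (if \<mu> > 2 * L then L / \<mu> else 1 - \<mu> / (4 * L))"
proof (cases "\<mu> > 2 * L")
  case True
  have "L / (L + \<mu>) \<le> L / \<mu>"
    using assms by (intro divide_left_mono) auto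
  with True show ?thesis by simp
next
  case False
  have "\<mu> / (4 * L) \<le> \<mu> / (L + \<mu>)"
    using False assms by (intro divide_left_mono) auto
  moreover have "L / (L + \<mu>) = 1 - \<mu> / (L + \<mu>)"
    using assms by (simp add: divide_simps)
  ultimately show ?thesis using False by simp
qed

locale surrogate_minimization =
  fixes Th :: "'a::euclidean_space set"
    and f :: "'a \<Rightarrow> real"
    and \<theta>s :: 'a
    and L :: real
    and \<theta> :: "nat \<Rightarrow> 'a"
    and g :: "nat \<Rightarrow> 'a \<Rightarrow> real"
  assumes convex_Th: "convex Th"
    and minimizer_in: "\<theta>s \<in> Th"
    and minimizer: "\<forall>x\<in>Th. f \<theta>s \<le> f x"
    and start_in: "\<theta> 0 \<in> Th"
    and surrogate: "\<forall>n\<ge>1. first_order_surrogate Th L f (\<theta> (n - 1)) (g n)"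
    and argmin_step: "\<forall>n\<ge>1. is_argmin_on Th (g n) (\<theta> n)"
begin

lemma iterate_in: "\<theta> n \<in> Th"
  using start_in argmin_step unfolding is_argmin_on_def by (cases n) auto

lemma excess_nonneg: "f (\<theta> n) - f \<theta>s \<ge> 0"
  using minimizer iterate_in by auto

lemma step_le:
  assumes "x \<in> Th"
  shows "f (\<theta> (Suc n)) \<le> f x + L / 2 * (norm (x - \<theta> n))\<^sup>2"
proof (rule first_order_surrogate_argmin_le[OF _ _ assms])
  show "first_order_surrogate Th L f (\<theta> n) (g (Suc n))"
    using surrogate by (metis diff_Suc_1 le_add1 plus_1_eq_Suc)
  show "is_argmin_on Th (g (Suc n)) (\<theta> (Suc n))"
    using argmin_step by simp
qed

lemma iterate_le_start: "f (\<theta> n) \<le> f (\<theta> 0)"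
proof (induction n)
  case (Suc n)
  then show ?case using step_le[OF iterate_in, of n n] by simp
qed simp

lemma step_le_segment:
  assumes "0 \<le> a" "a \<le> 1"
  shows "f (\<theta> (Suc n)) \<le> f (a *\<^sub>R \<theta>s + (1 - a) *\<^sub>R \<theta> n) + L / 2 * a\<^sup>2 * (norm (\<theta>s - \<theta> n))\<^sup>2"
proof -
  have "a *\<^sub>R \<theta>s + (1 - a) *\<^sub>R \<theta> n \<in> Th"
    using convexD[OF convex_Th minimizer_in iterate_in] assms by simp
  then have "f (\<theta> (Suc n)) \<le> f (a *\<^sub>R \<theta>s + (1 - a) *\<^sub>R \<theta> n)
      + L / 2 * (norm (a *\<^sub>R \<theta>s + (1 - a) *\<^sub>R \<theta> n - \<theta> n))\<^sup>2"
    by (rule step_le)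
  also have "a *\<^sub>R \<theta>s + (1 - a) *\<^sub>R \<theta> n - \<theta> n = a *\<^sub>R (\<theta>s - \<theta> n)"
    by (simp add: algebra_simps)
  also have "(norm (a *\<^sub>R (\<theta>s - \<theta> n)))\<^sup>2 = a\<^sup>2 * (norm (\<theta>s - \<theta> n))\<^sup>2"
    using assms by (simp add: power_mult_distrib)
  finally show ?thesis by (simp add: mult.assoc)
qed

theorem sublinear_rate:
  assumes convex_f: "convex_on UNIV f" and L: "L \<ge> 0"
    and bounded_level: "\<forall>x\<in>Th. f x \<le> f (\<theta> 0) \<longrightarrow> norm (x - \<theta>s) \<le> R"
    and n: "n \<ge> 1"
  shows "f (\<theta> n) - f \<theta>s \<le> 2 * L * R\<^sup>2 / (real n + 2)"
proof -
  have recursion: "f (\<theta> (Suc m)) - f \<theta>s \<le> (1 - a) * (f (\<theta> m) - f \<theta>s) + a\<^sup>2 * (L * R\<^sup>2) / 2"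
    if a: "0 \<le> a" "a \<le> 1" for m a
  proof -
    have "f (a *\<^sub>R \<theta>s + (1 - a) *\<^sub>R \<theta> m) \<le> a * f \<theta>s + (1 - a) * f (\<theta> m)"
      using convex_onD[OF convex_f, of "1 - a" \<theta>s "\<theta> m"] a by simp
    moreover have "norm (\<theta>s - \<theta> m) \<le> R"
      using bounded_level iterate_in iterate_le_start by (metis norm_minus_commute)
    then have "L / 2 * a\<^sup>2 * (norm (\<theta>s - \<theta> m))\<^sup>2 \<le> L / 2 * a\<^sup>2 * R\<^sup>2"
      using L by (intro mult_left_mono power_mono) auto
    ultimately show ?thesis
      using step_le_segment[OF a, of m] by (simp add: algebra_simps)
  qed
  obtain m where m: "n = Suc m" using n by (cases n) auto
  have "f (\<theta> (Suc m)) - f \<theta>s \<le> 2 * (L * R\<^sup>2) / (real m + 3)"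
    by (rule sublinear_rate_of_recursion[where r = "\<lambda>m. f (\<theta> m) - f \<theta>s"])
      (use L recursion in auto)
  moreover have "real n + 2 = real m + 3" using m by simp
  ultimately show ?thesis using m by (simp add: mult.assoc add.commute)
qed

theorem linear_rate:
  assumes strongly_convex_f: "strongly_convex \<mu> f" and \<mu>: "\<mu> > 0" and L: "L > 0"
  shows "f (\<theta> n) - f \<theta>s \<le> (L / (L + \<mu>)) ^ n * (f (\<theta> 0) - f \<theta>s)"
proof (induction n)
  case (Suc n)
  define a where "a = \<mu> / (L + \<mu>)"
  have a: "0 \<le> a" "a \<le> 1" using \<mu> L by (auto simp: a_def)
  have ratio: "1 - a = L / (L + \<mu>)"
    using \<mu> L by (simp add: a_def field_simps)
  define d where "d = (norm (\<theta>s - \<theta> n))\<^sup>2"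
  have "f (\<theta> (Suc n)) \<le> f (a *\<^sub>R \<theta>s + (1 - a) *\<^sub>R \<theta> n) + L / 2 * a\<^sup>2 * d"
    using step_le_segment[OF a] unfolding d_def .
  also have "\<dots> \<le> a * f \<theta>s + (1 - a) * f (\<theta> n) - \<mu> / 2 * a * (1 - a) * d + L / 2 * a\<^sup>2 * d"
    using strongly_convex_f a unfolding strongly_convex_def d_def by simp
  also have "L / 2 * a\<^sup>2 = \<mu> / 2 * a * (1 - a)"
    using \<mu> L by (simp add: a_def field_simps power2_eq_square)
  finally have "f (\<theta> (Suc n)) - f \<theta>s \<le> (1 - a) * (f (\<theta> n) - f \<theta>s)"
    by (simp add: algebra_simps)
  also have "\<dots> \<le> (1 - a) * ((L / (L + \<mu>)) ^ n * (f (\<theta> 0) - f \<theta>s))"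
    using Suc.IH a by (intro mult_left_mono) auto
  finally show ?case unfolding ratio by (simp add: mult.assoc)
qed simp

end

theorem proposition2p2:
  fixes Th :: "'a::euclidean_space set"
    and f :: "'a \<Rightarrow> real"
    and \<theta>s :: 'a
    and L :: real
    and \<theta> :: "nat \<Rightarrow> 'a"
    and g :: "nat \<Rightarrow> 'a \<Rightarrow> real"
  assumes convTh: "convex Th"
    and contf: "continuous_on UNIV f"
    and convf: "convex_on UNIV f"
    and bddf: "bdd_below (range f)"
    and min_in: "\<theta>s \<in> Th"
    and min: "\<forall>x\<in>Th. f \<theta>s \<le> f x"
    and Lpos: "L > 0"
    and init: "\<theta> 0 \<in> Th"
    and surr: "\<forall>n\<ge>1. first_order_surrogate Th L f (\<theta> (n - 1)) (g n)"
    and step: "\<forall>n\<ge>1. is_argmin_on Th (g n) (\<theta> n)"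
  shows "(\<forall>R > 0. (\<forall>x\<in>Th. f x \<le> f (\<theta> 0) \<longrightarrow> norm (x - \<theta>s) \<le> R) \<longrightarrow>
            (\<forall>n\<ge>1. f (\<theta> n) - f \<theta>s \<le> 2 * L * R\<^sup>2 / (real n + 2)))
       \<and> (\<forall>\<mu> > 0. strongly_convex \<mu> f \<longrightarrow>
            (let \<beta> = (if \<mu> > 2 * L then L / \<mu> else 1 - \<mu> / (4 * L)) in
             \<forall>n\<ge>1. f (\<theta> n) - f \<theta>s \<le> \<beta> ^ n * (f (\<theta> 0) - f \<theta>s)))"
proof -
  interpret surrogate_minimization Th f \<theta>s L \<theta> g
    using convTh min_in min init surr step by unfold_locales
  show ?thesis
  proof (intro conjI allI impI)
    fix R :: real and n :: nat
    assume "R > 0" "\<forall>x\<in>Th. f x \<le> f (\<theta> 0) \<longrightarrow> norm (x - \<theta>s) \<le> R" "1 \<le> n"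
    with Lpos show "f (\<theta> n) - f \<theta>s \<le> 2 * L * R\<^sup>2 / (real n + 2)"
      by (intro sublinear_rate[OF convf]) auto
  next
    fix \<mu> :: real
    assume \<mu>: "\<mu> > 0" and strongly_convex_f: "strongly_convex \<mu> f"
    define \<beta> where "\<beta> = (if \<mu> > 2 * L then L / \<mu> else 1 - \<mu> / (4 * L))"
    have "f (\<theta> n) - f \<theta>s \<le> \<beta> ^ n * (f (\<theta> 0) - f \<theta>s)" for n
    proof -
      have "(L / (L + \<mu>)) ^ n \<le> \<beta> ^ n"
        using linear_rate_ratio_le[OF Lpos \<mu>] Lpos \<mu> unfolding \<beta>_def by (intro power_mono) auto
      then show ?thesis
        using linear_rate[OF strongly_convex_f \<mu> Lpos] excess_nonneg[of 0]
        by (meson mult_right_mono order_trans)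
    qed
    then show "let \<beta> = (if \<mu> > 2 * L then L / \<mu> else 1 - \<mu> / (4 * L)) in
        \<forall>n\<ge>1. f (\<theta> n) - f \<theta>s \<le> \<beta> ^ n * (f (\<theta> 0) - f \<theta>s)"
      unfolding \<beta>_def Let_def by blast
  qed
qed

end
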